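(* For all $e,f\in\mathrm{Exp}$, if $e\equiv f$ then $e\sim f$.
   Context: Fix a finite set $T$ of primitive tests, a set $\mathrm{Act}$ of atomic actions, a set $\mathrm{Out}$ of return values, and a semiring $(S,+,\cdot,0,1)$ that is positive ($x+y=0\Rightarrow x=y=0$), refinement (whenever $x+y=z+w$ there exist $s,t,u,v$ with $s+t=x$, $s+u=z$, $u+v=y$, $t+v=w$) and Conway (with ${}^*:S\to S$ satisfying $(a+b)^*=a^*(ba^* )^*$, $(ab)^*=1+a(ba)^*b$). Tests: $b,c\in\mathrm{BExp}::=\mathtt{0}\mid\mathtt{1}\mid t\ (t\in T)\mid\bar b\mid b+c\mid bc$ ($\mathtt 0,\mathtt 1$ false/true, distinct from semiring $0,1$); $\equiv_{BA}$ is Boolean equivalence; $\mathrm{At}$ is the finite set of atoms of the free Boolean algebra on $T$, atoms also regarded as tests; $\alpha\le b$ means $\alpha$ entails $b$. Expressions: $e,f\in\mathrm{Exp}::= p\in\mathrm{Act}\mid b\in\mathrm{BExp}\mid e+_b f\mid e;f\mid e^{(b)}\mid v\in\mathrm{Out}\mid e\oplus_{r,s} f\ (r,s\in S)$; $\odot r:=\mathtt 1\oplus_{r,0}\mathtt 0$. $\mathcal M_\omega(X)$: finitely supported maps $X\to S$, pointwise operations; $\delta_x$ indicator of $x$; $\nu[A]=\sum_{x\in A}\nu(x)$. A wGKAT automaton is $(X,\beta)$ with $\beta:X\to\mathcal M_\omega(\{\mathsf{acc},\mathsf{rej}\}+\mathrm{Out}+\mathrm{Act}\times X)^{\mathrm{At}}$.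 A map $h:X\to Y$ between automata $(X,\beta),(Y,\gamma)$ is a homomorphism if for all $x,\alpha$: $\gamma(h(x))_\alpha(o)=\beta(x)_\alpha(o)$ for $o\in\{\mathsf{acc},\mathsf{rej}\}+\mathrm{Out}$, and $\gamma(h(x))_\alpha(p,y)=\beta(x)_\alpha[\{p\}\times h^{-1}(y)]$. A relation $R\subseteq X\times Y$ is a bisimulation if there is $\rho:R\to\mathcal M_\omega(\{\mathsf{acc},\mathsf{rej}\}+\mathrm{Out}+\mathrm{Act}\times R)^{\mathrm{At}}$ making both projections homomorphisms from $(R,\rho)$; $e\sim f$ means some bisimulation on the derivative automaton $(\mathrm{Exp},\partial)$ contains $(e,f)$. The derivative automaton: $\partial(b)_\alpha=\delta_{\mathsf{acc}}$ if $\alpha\le b$, else $\delta_{\mathsf{rej}}$; $\partial(v)_\alpha=\delta_v$; $\partial(p)_\alpha=\delta_{(p,\mathtt 1)}$; $\partial(e+_bf)_\alpha=\partial(e)_\alpha$ if $\alpha\le b$, else $\partial(f)_\alpha$; $\partial(e\oplus_{r,s}f)_\alpha=r\partial(e)_\alpha+s\partial(f)_\alpha$; $\partial(e;f)_\alpha=\sum_x\partial(e)_\alpha(x)c_{\alpha,f}(x)$ with $c_{\alpha,f}(\mathsf{acc})=\partial(f)_\alpha$, $c_{\alpha,f}(x)=\delta_x$ for $x\in\{\mathsf{rej}\}\cup\mathrm{Out}$, $c_{\alpha,f}(p,e')=\delta_{(p,e';f)}$; $\partial(e^{(b)})_\alpha(x)$ is $1$ if $x=\mathsf{acc}$ and $\alpha\le\bar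 b$; $\partial(e)_\alpha(\mathsf{acc})^*\partial(e)_\alpha(x)$ if $x\in\{\mathsf{rej}\}\cup\mathrm{Out}$ and $\alpha\le b$; $\partial(e)_\alpha(\mathsf{acc})^*\partial(e)_\alpha(p,e')$ if $x=(p,e';e^{(b)})$ and $\alpha\le b$; $0$ otherwise. $E:\mathrm{Exp}\to S^{\mathrm{At}}$: $E(p)_\alpha=E(v)_\alpha=0$; $E(b)_\alpha=1$ if $\alpha\le b$ else $0$; $E(e\oplus_{r,s}f)_\alpha=rE(e)_\alpha+sE(f)_\alpha$; $E(e+_bf)_\alpha=E(e)_\alpha$ if $\alpha\le b$ else $E(f)_\alpha$; $E(e;f)_\alpha=E(e)_\alpha E(f)_\alpha$; $E(e^{(b)})_\alpha=E(\bar b)_\alpha$. The relation $\equiv$ is the smallest congruence on $\mathrm{Exp}$ (tests taken up to $\equiv_{BA}$; sequencing binds tighter than $\oplus$, $\odot$ binds tightest) containing, for all $e,f,g\in\mathrm{Exp}$, tests $b,c$, $v\in\mathrm{Out}$, $r,s,t,u\in S$: (G1) $e+_be\equiv e$; (G2) $e+_bf\equiv b;e+_bf$; (G3) $e+_bf\equiv f+_{\bar b}e$; (G4) $(e+_bf)+_cg\equiv e+_{bc}(f+_cg)$; (D1) $e\oplus_{r,s}(f+_bg)\equiv(e\oplus_{r,s}f)+_b(e\oplus_{r,s}g)$; (D2) $e\oplus_{r,s}(f\oplus_{t,u}g)\equiv e\oplus_{r,1}(f\oplus_{st,su}g)$; (D3) $b;(e\oplus_{r,s}f)\equiv b;(b;e\oplus_{r,s}b;f)$;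 (S1) $\mathtt 1;e\equiv e\equiv e;\mathtt 1$; (S2) $(e;f);g\equiv e;(f;g)$; (S3) $\mathtt 0;e\equiv\mathtt 0$; (S4) $(e\oplus_{r,s}f);g\equiv e;g\oplus_{r,s}f;g$; (S5) $(e+_bf);g\equiv e;g+_bf;g$; (S6) $v;e\equiv v$; (S7) $b;c\equiv bc$; (L1) $e^{(b)}\equiv e;e^{(b)}+_b\mathtt 1$; (C1) $\odot1\equiv\mathtt 1$; (C2) $\odot0;e\equiv\odot0$; (W1) $e\oplus_{r,s}e\equiv\odot(r+s);e$; (W2) $e\oplus_{r,s}f\equiv f\oplus_{s,r}e$; (W3) $e\oplus_{r,s}(f\oplus_{t,u}g)\equiv(e\oplus_{r,st}f)\oplus_{1,su}g$; (W4) $e\oplus_{ru,s}f\equiv(\odot u;e)\oplus_{r,s}f$; and closed under the rules (L2) if $e\equiv(f\oplus_{r,s}\mathtt 1)+_cg$ then $c;e^{(b)}\equiv c;((\odot(s^*r);f;e^{(b)})+_b\mathtt 1)$; (F1) if $g\equiv e;g+_bf$ and $E(e)_\alpha=0$ for all $\alpha\in\mathrm{At}$ then $g\equiv e^{(b)};f$. *)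

theory Defs
  imports Main
begin

class wgkat_semiring = semiring_0 + monoid_mult +
  fixes cstar :: "'a \<Rightarrow> 'a"
  assumes positive: "x + y = 0 \<Longrightarrow> x = 0 \<and> y = 0"
  and refinement: "x + y = z + w \<Longrightarrow>
       \<exists>s t u v. s + t = x \<and> s + u = z \<and> u + v = y \<and> t + v = w"
  and conway_sum: "cstar (a + b) = cstar a * cstar (b * cstar a)"
  and conway_prod: "cstar (a * b) = 1 + a * cstar (b * a) * b"

datatype 't bexp = BZero | BOne | BPrim 't | BNot "'t bexp"
  | BOr "'t bexp" "'t bexp" | BAnd "'t bexp" "'t bexp"

text \<open>Atoms of the free Boolean algebra on the finite set of primitive tests
 (type 't :: finite) are represented by the set of primitive tests they make true.
 beval b A means that atom A entails b.\<close>

primrec beval :: "'t bexp \<Rightarrow> 't set \<Rightarrow> bool" where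
  "beval BZero A = False"
| "beval BOne A = True"
| "beval (BPrim t) A = (t \<in> A)"
| "beval (BNot b) A = (\<not> beval b A)"
| "beval (BOr b c) A = (beval b A \<or> beval c A)"
| "beval (BAnd b c) A = (beval b A \<and> beval c A)"

definition ba_equiv :: "'t::finite bexp \<Rightarrow> 't bexp \<Rightarrow> bool" where
  "ba_equiv b c = (\<forall>A. beval b A = beval c A)"

datatype ('t, 'p, 'v, 's) exp =
    EAct 'p
  | ETest "'t bexp"
  | EGuard "('t, 'p, 'v, 's) exp" "'t bexp" "('t, 'p, 'v, 's) exp"
  | ESeq "('t, 'p, 'v, 's) exp" "('t, 'p, 'v, 's) exp"
  | ELoop "('t, 'p, 'v, 's) exp" "'t bexp"
  | EOut 'v
  | EWeight "('t, 'p, 'v, 's) exp" 's 's "('t, 'p, 'v, 's) exp"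

definition wdot :: "'s::{zero} \<Rightarrow> ('t, 'p, 'v, 's) exp" where
  "wdot r = EWeight (ETest BOne) r 0 (ETest BZero)"

datatype ('v, 'p, 'x) outc = OAcc | ORej | OOut 'v | OAct 'p 'x

fun is_act :: "('v, 'p, 'x) outc \<Rightarrow> bool" where
  "is_act (OAct p x) = True"
| "is_act _ = False"

definition supp :: "('a \<Rightarrow> 's::zero) \<Rightarrow> 'a set" where
  "supp \<nu> = {x. \<nu> x \<noteq> 0}"

definition delta :: "'a \<Rightarrow> 'a \<Rightarrow> 's::{zero,one}" where
  "delta x = (\<lambda>y. if y = x then 1 else 0)"

definition mass :: "('a \<Rightarrow> 's::comm_monoid_add) \<Rightarrow> 'a set \<Rightarrow> 's" where
  "mass \<nu> A = sum \<nu> (A \<inter> supp \<nu>)"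

definition cont :: "(('v, 'p, ('t, 'p, 'v, 's) exp) outc \<Rightarrow> 's::{zero,one})
    \<Rightarrow> ('t, 'p, 'v, 's) exp \<Rightarrow> ('v, 'p, ('t, 'p, 'v, 's) exp) outc
    \<Rightarrow> ('v, 'p, ('t, 'p, 'v, 's) exp) outc \<Rightarrow> 's" where
  "cont df f x = (case x of
      OAcc \<Rightarrow> df
    | ORej \<Rightarrow> delta ORej
    | OOut v \<Rightarrow> delta (OOut v)
    | OAct p e' \<Rightarrow> delta (OAct p (ESeq e' f)))"

primrec deriv :: "('t, 'p, 'v, 's::wgkat_semiring) exp \<Rightarrow> 't set
    \<Rightarrow> ('v, 'p, ('t, 'p, 'v, 's) exp) outc \<Rightarrow> 's" where
  "deriv (ETest b) A = (if beval b A then delta OAcc else delta ORej)"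
| "deriv (EOut v) A = delta (OOut v)"
| "deriv (EAct p) A = delta (OAct p (ETest BOne))"
| "deriv (EGuard e b f) A = (if beval b A then deriv e A else deriv f A)"
| "deriv (EWeight e r s f) A = (\<lambda>x. r * deriv e A x + s * deriv f A x)"
| "deriv (ESeq e f) A =
     (\<lambda>y. \<Sum>x\<in>supp (deriv e A). deriv e A x * cont (deriv f A) f x y)"
| "deriv (ELoop e b) A = (\<lambda>x. case x of
       OAcc \<Rightarrow> (if \<not> beval b A then 1 else 0)
     | ORej \<Rightarrow> (if beval b A then cstar (deriv e A OAcc) * deriv e A ORej else 0)
     | OOut v \<Rightarrow> (if beval b A then cstar (deriv e A OAcc) * deriv e A (OOut v) else 0)
     | OAct p g \<Rightarrow> (case g of
           ESeq e' h \<Rightarrow> (if h = ELoop e b \<and> beval b A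
                          then cstar (deriv e A OAcc) * deriv e A (OAct p e') else 0)
         | _ \<Rightarrow> 0))"

definition is_aut :: "'x set \<Rightarrow> ('x \<Rightarrow> 'a \<Rightarrow> ('v, 'p, 'x) outc \<Rightarrow> 's::zero) \<Rightarrow> bool" where
  "is_aut X \<beta> = (\<forall>x\<in>X. \<forall>A. finite (supp (\<beta> x A)) \<and>
       (\<forall>p y. \<beta> x A (OAct p y) \<noteq> 0 \<longrightarrow> y \<in> X))"

definition is_hom :: "'x set \<Rightarrow> ('x \<Rightarrow> 'a \<Rightarrow> ('v, 'p, 'x) outc \<Rightarrow> 's::comm_monoid_add)
    \<Rightarrow> 'y set \<Rightarrow> ('y \<Rightarrow> 'a \<Rightarrow> ('v, 'p, 'y) outc \<Rightarrow> 's) \<Rightarrow> ('x \<Rightarrow> 'y) \<Rightarrow> bool" where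
  "is_hom X \<beta> Y \<gamma> h = (\<forall>x\<in>X. h x \<in> Y \<and> (\<forall>A.
       (\<forall>ob. \<not> is_act ob \<longrightarrow> \<gamma> (h x) A (map_outc id id h ob) = \<beta> x A ob) \<and>
       (\<forall>p y. y \<in> Y \<longrightarrow>
          \<gamma> (h x) A (OAct p y) = mass (\<beta> x A) {OAct p x' | x'. x' \<in> X \<and> h x' = y})))"

definition bisim :: "(('t::finite, 'p, 'v, 's::wgkat_semiring) exp \<times> ('t, 'p, 'v, 's) exp) set \<Rightarrow> bool" where
  "bisim R = (\<exists>\<rho>. is_aut R \<rho> \<and> is_hom R \<rho> UNIV deriv fst \<and> is_hom R \<rho> UNIV deriv snd)"

definition bisimilar :: "('t::finite, 'p, 'v, 's::wgkat_semiring) exp \<Rightarrow> ('t, 'p, 'v, 's) exp \<Rightarrow> bool"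
    (infix "\<sim>\<^sub>w" 50) where
  "e \<sim>\<^sub>w f = (\<exists>R. bisim R \<and> (e, f) \<in> R)"

primrec Eterm :: "('t, 'p, 'v, 's::wgkat_semiring) exp \<Rightarrow> 't set \<Rightarrow> 's" where
  "Eterm (EAct p) A = 0"
| "Eterm (EOut v) A = 0"
| "Eterm (ETest b) A = (if beval b A then 1 else 0)"
| "Eterm (EWeight e r s f) A = r * Eterm e A + s * Eterm f A"
| "Eterm (EGuard e b f) A = (if beval b A then Eterm e A else Eterm f A)"
| "Eterm (ESeq e f) A = Eterm e A * Eterm f A"
| "Eterm (ELoop e b) A = (if beval (BNot b) A then 1 else 0)"

inductive wequiv :: "('t::finite, 'p, 'v, 's::wgkat_semiring) exp \<Rightarrow> ('t, 'p, 'v, 's) exp \<Rightarrow> bool"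
    (infix "\<equiv>\<^sub>w" 50) where
  refl: "e \<equiv>\<^sub>w e"
| sym: "e \<equiv>\<^sub>w f \<Longrightarrow> f \<equiv>\<^sub>w e"
| trans: "e \<equiv>\<^sub>w f \<Longrightarrow> f \<equiv>\<^sub>w g \<Longrightarrow> e \<equiv>\<^sub>w g"
| test_ba: "ba_equiv b c \<Longrightarrow> ETest b \<equiv>\<^sub>w ETest c"
| guard_ba: "ba_equiv b c \<Longrightarrow> EGuard e b f \<equiv>\<^sub>w EGuard e c f"
| loop_ba: "ba_equiv b c \<Longrightarrow> ELoop e b \<equiv>\<^sub>w ELoop e c"
| guard_cong: "e \<equiv>\<^sub>w e' \<Longrightarrow> f \<equiv>\<^sub>w f' \<Longrightarrow> EGuard e b f \<equiv>\<^sub>w EGuard e' b f'"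
| seq_cong: "e \<equiv>\<^sub>w e' \<Longrightarrow> f \<equiv>\<^sub>w f' \<Longrightarrow> ESeq e f \<equiv>\<^sub>w ESeq e' f'"
| loop_cong: "e \<equiv>\<^sub>w e' \<Longrightarrow> ELoop e b \<equiv>\<^sub>w ELoop e' b"
| weight_cong: "e \<equiv>\<^sub>w e' \<Longrightarrow> f \<equiv>\<^sub>w f' \<Longrightarrow> EWeight e r s f \<equiv>\<^sub>w EWeight e' r s f'"
| G1: "EGuard e b e \<equiv>\<^sub>w e"
| G2: "EGuard e b f \<equiv>\<^sub>w EGuard (ESeq (ETest b) e) b f"
| G3: "EGuard e b f \<equiv>\<^sub>w EGuard f (BNot b) e"
| G4: "EGuard (EGuard e b f) c g \<equiv>\<^sub>w EGuard e (BAnd b c) (EGuard f c g)"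
| D1: "EWeight e r s (EGuard f b g) \<equiv>\<^sub>w EGuard (EWeight e r s f) b (EWeight e r s g)"
| D2: "EWeight e r s (EWeight f t u g) \<equiv>\<^sub>w EWeight e r 1 (EWeight f (s * t) (s * u) g)"
| D3: "ESeq (ETest b) (EWeight e r s f) \<equiv>\<^sub>w
        ESeq (ETest b) (EWeight (ESeq (ETest b) e) r s (ESeq (ETest b) f))"
| S1l: "ESeq (ETest BOne) e \<equiv>\<^sub>w e"
| S1r: "e \<equiv>\<^sub>w ESeq e (ETest BOne)"
| S2: "ESeq (ESeq e f) g \<equiv>\<^sub>w ESeq e (ESeq f g)"
| S3: "ESeq (ETest BZero) e \<equiv>\<^sub>w ETest BZero"
| S4: "ESeq (EWeight e r s f) g \<equiv>\<^sub>w EWeight (ESeq e g) r s (ESeq f g)"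
| S5: "ESeq (EGuard e b f) g \<equiv>\<^sub>w EGuard (ESeq e g) b (ESeq f g)"
| S6: "ESeq (EOut v) e \<equiv>\<^sub>w EOut v"
| S7: "ESeq (ETest b) (ETest c) \<equiv>\<^sub>w ETest (BAnd b c)"
| L1: "ELoop e b \<equiv>\<^sub>w EGuard (ESeq e (ELoop e b)) b (ETest BOne)"
| C1: "wdot 1 \<equiv>\<^sub>w ETest BOne"
| C2: "ESeq (wdot 0) e \<equiv>\<^sub>w wdot 0"
| W1: "EWeight e r s e \<equiv>\<^sub>w ESeq (wdot (r + s)) e"
| W2: "EWeight e r s f \<equiv>\<^sub>w EWeight f s r e"
| W3: "EWeight e r s (EWeight f t u g) \<equiv>\<^sub>w EWeight (EWeight e r (s * t) f) 1 (s * u) g"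
| W4: "EWeight e (r * u) s f \<equiv>\<^sub>w EWeight (ESeq (wdot u) e) r s f"
| L2: "e \<equiv>\<^sub>w EGuard (EWeight f r s (ETest BOne)) c g \<Longrightarrow>
        ESeq (ETest c) (ELoop e b) \<equiv>\<^sub>w
        ESeq (ETest c) (EGuard (ESeq (wdot (cstar s * r)) (ESeq f (ELoop e b))) b (ETest BOne))"
| F1: "g \<equiv>\<^sub>w EGuard (ESeq e g) b f \<Longrightarrow> (\<forall>A. Eterm e A = 0) \<Longrightarrow> g \<equiv>\<^sub>w ESeq (ELoop e b) f"

end

theory Submission
  imports Defs
begin

text \<open>
  By induction over derivations of \<open>e \<equiv>\<^sub>w f\<close>, the derivatives of equivalent expressions agree
  on acceptance, rejection and outputs and give the same total weight to every \<open>\<equiv>\<^sub>w\<close>-closed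
  set of action successors; the loop axioms L1 and L2 reduce to the Conway identities, and
  F1 to \<open>cstar 0 = 1\<close> because \<open>E(e) = 0\<close>. This makes \<open>\<equiv>\<^sub>w\<close> itself a bisimulation. For an
  action \<open>p\<close> and an equivalence class \<open>C\<close>, the weights that the two derivatives give to the
  \<open>p\<close>-successors in \<open>C\<close> are two finite families with equal sums, and in a positive refinement
  monoid such families admit a transport plan: a matrix with these row and column sums.
  Gluing the plans of all actions and classes gives the weighting on pairs of states that
  a bisimulation requires.
\<close>

lemma supp_delta: "supp (delta z) \<subseteq> {z}"
  by (auto simp: supp_def delta_def)

lemma mass_eq_sum:
  assumes "finite U" "U \<subseteq> T" "T \<inter> supp \<nu> \<subseteq> U"
  shows "mass \<nu> T = sum \<nu> U"
  unfolding mass_def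
  by (rule sum.mono_neutral_left) (use assms in \<open>auto simp: supp_def\<close>)

lemma mass_cong:
  assumes "\<And>x. x \<in> T \<Longrightarrow> \<nu> x = \<mu> x"
  shows "mass \<nu> T = mass \<mu> T"
proof -
  have "T \<inter> supp \<nu> = T \<inter> supp \<mu>"
    using assms by (auto simp: supp_def)
  then show ?thesis
    unfolding mass_def using assms by (auto intro: sum.cong)
qed

lemma mass_image:
  assumes "inj_on g S"
  shows "mass \<nu> (g ` S) = mass (\<nu> \<circ> g) S"
proof -
  have "g ` S \<inter> supp \<nu> = g ` (S \<inter> supp (\<nu> \<circ> g))"
    by (auto simp: supp_def)
  moreover have "inj_on g (S \<inter> supp (\<nu> \<circ> g))"
    using assms by (rule inj_on_subset) blast
  ultimately show ?thesis
    unfolding mass_def by (simp add: sum.reindex)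
qed

lemma mass_zero:
  assumes "\<And>x. x \<in> T \<Longrightarrow> \<nu> x = 0"
  shows "mass \<nu> T = 0"
  using mass_cong[of T \<nu> "\<lambda>_. 0", OF assms] by (simp add: mass_def)

lemma mass_scale:
  fixes \<nu> :: "'a \<Rightarrow> 's::semiring_0"
  assumes "finite (supp \<nu>)"
  shows "mass (\<lambda>x. c * \<nu> x) T = c * mass \<nu> T"
proof -
  have "mass (\<lambda>x. c * \<nu> x) T = (\<Sum>x\<in>T \<inter> supp \<nu>. c * \<nu> x)"
    using assms by (intro mass_eq_sum) (auto simp: supp_def)
  then show ?thesis
    by (simp add: mass_def sum_distrib_left)
qed

lemma finite_supp_scale:
  fixes \<nu> :: "'a \<Rightarrow> 's::semiring_0"
  assumes "finite (supp \<nu>)"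
  shows "finite (supp (\<lambda>x. c * \<nu> x))"
  using assms by (rule finite_subset[rotated]) (auto simp: supp_def)

lemma mass_add:
  fixes \<nu> \<mu> :: "'a \<Rightarrow> 's::comm_monoid_add"
  assumes "finite (supp \<nu>)" "finite (supp \<mu>)"
  shows "mass (\<lambda>x. \<nu> x + \<mu> x) T = mass \<nu> T + mass \<mu> T"
proof -
  let ?U = "T \<inter> (supp \<nu> \<union> supp \<mu>)"
  have "finite ?U"
    using assms by auto
  then have "mass (\<lambda>x. \<nu> x + \<mu> x) T = sum (\<lambda>x. \<nu> x + \<mu> x) ?U"
    "mass \<nu> T = sum \<nu> ?U" "mass \<mu> T = sum \<mu> ?U"
    by (auto intro!: mass_eq_sum simp: supp_def)
  then show ?thesis
    by (simp add: sum.distrib)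
qed

lemma supp_sum_subset: "supp (\<lambda>y. \<Sum>x\<in>X. g x y) \<subseteq> (\<Union>x\<in>X. supp (g x))"
  by (auto simp: supp_def intro: ccontr)

lemma mass_sum:
  fixes a :: "'b \<Rightarrow> 's::semiring_0"
  assumes "finite X" "\<And>x. x \<in> X \<Longrightarrow> finite (supp (k x))"
  shows "mass (\<lambda>y. \<Sum>x\<in>X. a x * k x y) T = (\<Sum>x\<in>X. a x * mass (k x) T)"
  using assms
proof (induction X rule: finite_induct)
  case (insert x X)
  have "(\<Union>x\<in>X. supp (\<lambda>y. a x * k x y)) \<subseteq> (\<Union>x\<in>X. supp (k x))"
    by (rule UN_mono) (auto simp: supp_def)
  then have "supp (\<lambda>y. \<Sum>x\<in>X. a x * k x y) \<subseteq> (\<Union>x\<in>X. supp (k x))"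
    using supp_sum_subset by (rule order_trans[rotated])
  then have "finite (supp (\<lambda>y. \<Sum>x\<in>X. a x * k x y))"
    using insert by (auto elim: finite_subset)
  then show ?case
    using insert by (simp add: mass_add mass_scale finite_supp_scale)
qed (simp add: mass_def)

lemma sum_supp_if_eq:
  fixes g :: "'a \<Rightarrow> 's::semiring_0"
  assumes "finite (supp g)"
  shows "(\<Sum>x\<in>supp g. if x = a then g x * c else 0) = g a * c"
  using assms by (simp add: sum.delta'[unfolded eq_commute[of _ a]] supp_def)

lemma mass_delta: "mass (delta z) T = (if z \<in> T then 1 else (0::'s::{one,comm_monoid_add}))"
proof -
  have "mass (delta z) T = sum (delta z) (T \<inter> {z})"
    by (intro mass_eq_sum) (auto simp: supp_def delta_def)
  then show ?thesis
    by (cases "z \<in> T") (simp_all add: delta_def)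
qed

section \<open>Refinement monoids and transport plans\<close>

class refinement_monoid = comm_monoid_add +
  assumes add_eq_0_imp: "x + y = 0 \<Longrightarrow> x = 0 \<and> y = 0"
    and add_refinement: "x + y = z + w \<Longrightarrow>
      \<exists>s t u v. s + t = x \<and> s + u = z \<and> u + v = y \<and> t + v = w"

subclass (in wgkat_semiring) refinement_monoid
  by standard (fact positive, fact refinement)

lemma sum_eq_0_imp_each:
  fixes b :: "'a \<Rightarrow> 's::refinement_monoid"
  assumes "finite J" "sum b J = 0" "j \<in> J"
  shows "b j = 0"
  using assms
proof (induction J rule: finite_induct)
  case (insert x F)
  then show ?case using add_eq_0_imp[of "b x" "sum b F"] by auto
qed simp

lemma sum_split_refinement:
  fixes b :: "'a \<Rightarrow> 's::refinement_monoid"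
  assumes "finite J" "x + y = sum b J"
  shows "\<exists>c d. (\<forall>j\<in>J. b j = c j + d j) \<and> sum c J = x \<and> sum d J = y"
  using assms
proof (induction J arbitrary: x y rule: finite_induct)
  case empty
  then have "x = 0" "y = 0" using add_eq_0_imp by auto
  then show ?case by (intro exI[of _ "\<lambda>_. 0"]) simp
next
  case (insert j J)
  then have "x + y = b j + sum b J" by simp
  then obtain s t u v where stuv: "s + t = x" "s + u = b j" "u + v = y" "t + v = sum b J"
    using add_refinement by metis
  obtain c d where cd: "\<forall>j\<in>J. b j = c j + d j" "sum c J = t" "sum d J = v"
    using insert.IH[OF stuv(4)] by blast
  have "sum (c(j := s)) J = sum c J" "sum (d(j := u)) J = sum d J"
    using insert.hyps by (auto intro!: sum.cong)
  then show ?case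
    using insert.hyps cd stuv by (intro exI[of _ "c(j := s)"] exI[of _ "d(j := u)"]) auto
qed

lemma transport_plan:
  fixes a :: "'a \<Rightarrow> 's::refinement_monoid" and b :: "'b \<Rightarrow> 's"
  assumes "finite I" "finite J" "sum a I = sum b J"
  obtains w where "\<And>i. i \<in> I \<Longrightarrow> sum (w i) J = a i"
    and "\<And>j. j \<in> J \<Longrightarrow> (\<Sum>i\<in>I. w i j) = b j"
    and "\<And>i j. w i j \<noteq> 0 \<Longrightarrow> i \<in> I \<and> j \<in> J"
proof -
  have "\<exists>w. (\<forall>i\<in>I. sum (w i) J = a i) \<and> (\<forall>j\<in>J. (\<Sum>i\<in>I. w i j) = b j)"
    using assms(1,3)
  proof (induction I arbitrary: b rule: finite_induct)
    case empty
    then have "\<forall>j\<in>J. b j = 0" using sum_eq_0_imp_each[OF assms(2), of b] by simp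
    then show ?case by (intro exI[of _ "\<lambda>_ _. 0"]) simp
  next
    case (insert i I)
    then have "a i + sum a I = sum b J" by simp
    then obtain c d where cd: "\<forall>j\<in>J. b j = c j + d j" "sum c J = a i" "sum d J = sum a I"
      using sum_split_refinement[OF assms(2)] by metis
    obtain w where w: "\<forall>i\<in>I. sum (w i) J = a i" "\<forall>j\<in>J. (\<Sum>i\<in>I. w i j) = d j"
      using insert.IH[OF cd(3)[symmetric]] by blast
    have "(\<Sum>i'\<in>I. (w(i := c)) i' j) = (\<Sum>i'\<in>I. w i' j)" for j
      using insert.hyps by (auto intro!: sum.cong)
    then show ?case
      using insert.hyps cd w by (intro exI[of _ "w(i := c)"]) auto
  qed
  then obtain w where w: "\<forall>i\<in>I. sum (w i) J = a i" "\<forall>j\<in>J. (\<Sum>i\<in>I. w i j) = b j"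
    by blast
  show ?thesis
  proof
    let ?w = "\<lambda>i j. if i \<in> I \<and> j \<in> J then w i j else 0"
    show "sum (?w i) J = a i" if "i \<in> I" for i
      using w that by (auto intro: sum.cong)
    show "(\<Sum>i\<in>I. ?w i j) = b j" if "j \<in> J" for j
      using w that by (auto intro: sum.cong)
    show "?w i j \<noteq> 0 \<Longrightarrow> i \<in> I \<and> j \<in> J" for i j
      by (auto split: if_splits)
  qed
qed

definition is_transport_plan :: "'a set \<Rightarrow> ('a \<Rightarrow> 's::comm_monoid_add) \<Rightarrow> ('a \<Rightarrow> 's)
    \<Rightarrow> ('a \<Rightarrow> 'a \<Rightarrow> 's) \<Rightarrow> bool" where
  "is_transport_plan C a b w \<longleftrightarrow>
     (\<forall>x\<in>C. mass (w x) C = a x) \<and> (\<forall>y\<in>C. mass (\<lambda>x. w x y) C = b y) \<and>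
     (\<forall>x y. w x y \<noteq> 0 \<longrightarrow> x \<in> C \<inter> supp a \<and> y \<in> C \<inter> supp b)"

lemma transport_plan_exists:
  fixes a b :: "'a \<Rightarrow> 's::refinement_monoid"
  assumes "finite (supp a)" "finite (supp b)" "mass a C = mass b C"
  shows "\<exists>w. is_transport_plan C a b w"
proof -
  let ?I = "C \<inter> supp a" and ?J = "C \<inter> supp b"
  have fin: "finite ?I" "finite ?J"
    using assms(1,2) by simp_all
  have eq: "sum a ?I = sum b ?J"
    using assms(3) by (simp add: mass_def)
  obtain w where row: "\<And>i. i \<in> ?I \<Longrightarrow> sum (w i) ?J = a i"
    and col: "\<And>j. j \<in> ?J \<Longrightarrow> (\<Sum>i\<in>?I. w i j) = b j"
    and w0: "\<And>i j. w i j \<noteq> 0 \<Longrightarrow> i \<in> ?I \<and> j \<in> ?J"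
    using transport_plan[OF fin eq] by blast
  have "mass (w x) C = a x" if "x \<in> C" for x
  proof (cases "x \<in> supp a")
    case True
    have "mass (w x) C = sum (w x) ?J"
      using fin w0 by (intro mass_eq_sum) (auto simp: supp_def)
    then show ?thesis using row that True by simp
  next
    case False
    then show ?thesis using w0 by (auto simp: supp_def intro: mass_zero)
  qed
  moreover have "mass (\<lambda>x. w x y) C = b y" if "y \<in> C" for y
  proof (cases "y \<in> supp b")
    case True
    have "mass (\<lambda>x. w x y) C = (\<Sum>x\<in>?I. w x y)"
      using fin w0 by (intro mass_eq_sum) (auto simp: supp_def)
    then show ?thesis using col that True by simp
  next
    case False
    then show ?thesis using w0 by (auto simp: supp_def intro: mass_zero)
  qed
  ultimately show ?thesis
    unfolding is_transport_plan_def using w0 by blast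
qed

section \<open>Couplings and bisimulations\<close>

definition is_coupling :: "('x \<times> 'y) set \<Rightarrow> (('v, 'p, 'x \<times> 'y) outc \<Rightarrow> 's::comm_monoid_add)
    \<Rightarrow> (('v, 'p, 'x) outc \<Rightarrow> 's) \<Rightarrow> (('v, 'p, 'y) outc \<Rightarrow> 's) \<Rightarrow> bool" where
  "is_coupling R \<kappa> \<nu> \<mu> \<longleftrightarrow> finite (supp \<kappa>) \<and> (\<forall>p z. \<kappa> (OAct p z) \<noteq> 0 \<longrightarrow> z \<in> R) \<and>
     (\<forall>ob. \<not> is_act ob \<longrightarrow> \<nu> (map_outc id id fst ob) = \<kappa> ob \<and> \<mu> (map_outc id id snd ob) = \<kappa> ob) \<and>
     (\<forall>p x. \<nu> (OAct p x) = mass \<kappa> {OAct p z |z. z \<in> R \<and> fst z = x}) \<and>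
     (\<forall>p y. \<mu> (OAct p y) = mass \<kappa> {OAct p z |z. z \<in> R \<and> snd z = y})"

lemma bisimI_coupling:
  fixes R :: "(('t::finite, 'p, 'v, 's::wgkat_semiring) exp \<times> ('t, 'p, 'v, 's) exp) set"
  assumes "\<And>e f A. (e, f) \<in> R \<Longrightarrow> \<exists>\<kappa>. is_coupling R \<kappa> (deriv e A) (deriv f A)"
  shows "bisim R"
proof -
  define \<rho> where "\<rho> z A = (SOME \<kappa>. is_coupling R \<kappa> (deriv (fst z) A) (deriv (snd z) A))" for z A
  have "is_coupling R (\<rho> z A) (deriv (fst z) A) (deriv (snd z) A)" if "z \<in> R" for z A
  proof -
    have "\<exists>\<kappa>. is_coupling R \<kappa> (deriv (fst z) A) (deriv (snd z) A)"
      using assms[of "fst z" "snd z" A] that by simp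
    then show ?thesis
      unfolding \<rho>_def by (rule someI_ex)
  qed
  then show ?thesis
    unfolding bisim_def is_aut_def is_hom_def is_coupling_def by (intro exI[of _ \<rho>]) auto
qed

definition glue_plans :: "('x \<times> 'x) set \<Rightarrow> (('v, 'p, 'x) outc \<Rightarrow> 's)
    \<Rightarrow> ('p \<Rightarrow> 'x set \<Rightarrow> 'x \<Rightarrow> 'x \<Rightarrow> 's) \<Rightarrow> ('v, 'p, 'x \<times> 'x) outc \<Rightarrow> 's" where
  "glue_plans R \<nu> W ob = (case ob of
      OAct p (x, y) \<Rightarrow> W p (R``{x}) x y
    | _ \<Rightarrow> \<nu> (map_outc id id fst ob))"

context
  fixes R :: "('x \<times> 'x) set" and \<nu> \<mu> :: "('v, 'p, 'x) outc \<Rightarrow> 's::refinement_monoid"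
    and W :: "'p \<Rightarrow> 'x set \<Rightarrow> 'x \<Rightarrow> 'x \<Rightarrow> 's"
  assumes R: "equiv UNIV R"
    and plans: "\<And>p C. C \<in> UNIV // R \<Longrightarrow>
      is_transport_plan C (\<lambda>x. \<nu> (OAct p x)) (\<lambda>y. \<mu> (OAct p y)) (W p C)"
begin

lemma plan_of_class:
  "is_transport_plan (R``{x}) (\<lambda>x. \<nu> (OAct p x)) (\<lambda>y. \<mu> (OAct p y)) (W p (R``{x}))"
  using plans[OF quotientI] by simp

lemma glue_plans_act_nonzero:
  assumes "glue_plans R \<nu> W (OAct p (x, y)) \<noteq> 0"
  shows "(x, y) \<in> R" "\<nu> (OAct p x) \<noteq> 0" "\<mu> (OAct p y) \<noteq> 0"
  using assms plan_of_class[of x p] by (auto simp: glue_plans_def is_transport_plan_def supp_def)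

lemma finite_supp_glue_plans:
  assumes "finite (supp \<nu>)" "finite (supp \<mu>)"
  shows "finite (supp (glue_plans R \<nu> W))"
proof (rule finite_subset)
  let ?acts = "\<lambda>\<nu>. case_prod OAct -` supp \<nu> :: ('p \<times> 'x) set"
  show "supp (glue_plans R \<nu> W) \<subseteq> {OAcc, ORej} \<union> OOut ` (OOut -` supp \<nu>)
      \<union> (\<lambda>((p, x), (q, y)). OAct p (x, y)) ` (?acts \<nu> \<times> ?acts \<mu>)"
  proof
    fix ob assume ob: "ob \<in> supp (glue_plans R \<nu> W)"
    show "ob \<in> {OAcc, ORej} \<union> OOut ` (OOut -` supp \<nu>)
      \<union> (\<lambda>((p, x), (q, y)). OAct p (x, y)) ` (?acts \<nu> \<times> ?acts \<mu>)"
    proof (cases ob)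
      case (OAct p z)
      then obtain x y where ob_xy: "ob = OAct p (x, y)"
        by (cases z) simp
      with ob have "((p, x), (p, y)) \<in> ?acts \<nu> \<times> ?acts \<mu>"
        using glue_plans_act_nonzero[of p x y] by (simp add: supp_def)
      then have "ob \<in> (\<lambda>((p, x), (q, y)). OAct p (x, y)) ` (?acts \<nu> \<times> ?acts \<mu>)"
        unfolding ob_xy by (rule image_eqI[rotated]) simp
      then show ?thesis
        by blast
    qed (use ob in \<open>auto simp: glue_plans_def supp_def\<close>)
  qed
  have "inj (case_prod OAct :: 'p \<times> 'x \<Rightarrow> ('v, 'p, 'x) outc)" "inj (OOut :: 'v \<Rightarrow> ('v, 'p, 'x) outc)"
    by (auto intro: injI)
  then show "finite ({OAcc, ORej} \<union> OOut ` (OOut -` supp \<nu>)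
      \<union> (\<lambda>((p, x), (q, y)). OAct p (x, y)) ` (?acts \<nu> \<times> ?acts \<mu>))"
    using assms by (simp add: finite_vimageI)
qed

lemma glue_plans_fst_marginal:
  "\<nu> (OAct p x) = mass (glue_plans R \<nu> W) {OAct p z |z. z \<in> R \<and> fst z = x}"
proof -
  have "\<nu> (OAct p x) = mass (W p (R``{x}) x) (R``{x})"
    using plan_of_class[of x p] equiv_class_self[OF R] by (simp add: is_transport_plan_def)
  also have "\<dots> = mass (glue_plans R \<nu> W) ((\<lambda>y. OAct p (x, y)) ` (R``{x}))"
    using mass_image[of "\<lambda>y. OAct p (x, y)" "R``{x}" "glue_plans R \<nu> W"]
    by (simp add: inj_on_def comp_def glue_plans_def)
  also have "(\<lambda>y. OAct p (x, y)) ` (R``{x}) = {OAct p z |z. z \<in> R \<and> fst z = x}"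
    by force
  finally show ?thesis .
qed

lemma glue_plans_snd_marginal:
  "\<mu> (OAct p y) = mass (glue_plans R \<nu> W) {OAct p z |z. z \<in> R \<and> snd z = y}"
proof -
  have "\<mu> (OAct p y) = mass (\<lambda>x. W p (R``{y}) x y) (R``{y})"
    using plan_of_class[of y p] equiv_class_self[OF R] by (simp add: is_transport_plan_def)
  also have "\<dots> = mass (\<lambda>x. W p (R``{x}) x y) (R``{y})"
    using R by (intro mass_cong) (metis Image_singleton_iff equiv_class_eq_iff)
  also have "\<dots> = mass (glue_plans R \<nu> W) ((\<lambda>x. OAct p (x, y)) ` (R``{y}))"
    using mass_image[of "\<lambda>x. OAct p (x, y)" "R``{y}" "glue_plans R \<nu> W"]
    by (simp add: inj_on_def comp_def glue_plans_def)
  also have "(\<lambda>x. OAct p (x, y)) ` (R``{y}) = {OAct p z |z. z \<in> R \<and> snd z = y}"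
    using R by (force elim: equivE symE)
  finally show ?thesis .
qed

end

lemma coupling_exists:
  fixes \<nu> \<mu> :: "('v, 'p, 'x) outc \<Rightarrow> 's::refinement_monoid"
  assumes R: "equiv UNIV R" and fin: "finite (supp \<nu>)" "finite (supp \<mu>)"
    and nonact: "\<And>ob. \<not> is_act ob \<Longrightarrow> \<nu> ob = \<mu> ob"
    and classes: "\<And>p C. C \<in> UNIV // R \<Longrightarrow> mass \<nu> (OAct p ` C) = mass \<mu> (OAct p ` C)"
  shows "\<exists>\<kappa>. is_coupling R \<kappa> \<nu> \<mu>"
proof -
  define W where
    "W p C = (SOME w. is_transport_plan C (\<lambda>x. \<nu> (OAct p x)) (\<lambda>y. \<mu> (OAct p y)) w)" for p C
  have W: "is_transport_plan C (\<lambda>x. \<nu> (OAct p x)) (\<lambda>y. \<mu> (OAct p y)) (W p C)"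
    if "C \<in> UNIV // R" for p C
    unfolding W_def
  proof (rule someI_ex[OF transport_plan_exists])
    have "supp (\<lambda>x. \<nu> (OAct p x)) = OAct p -` supp \<nu>" "supp (\<lambda>y. \<mu> (OAct p y)) = OAct p -` supp \<mu>"
      by (auto simp: supp_def)
    then show "finite (supp (\<lambda>x. \<nu> (OAct p x)))" "finite (supp (\<lambda>y. \<mu> (OAct p y)))"
      using fin by (simp_all add: finite_vimageI inj_on_def)
    show "mass (\<lambda>x. \<nu> (OAct p x)) C = mass (\<lambda>y. \<mu> (OAct p y)) C"
      using classes[OF that] mass_image[of "OAct p" C \<nu>] mass_image[of "OAct p" C \<mu>]
      by (simp add: comp_def inj_on_def)
  qed
  have "is_coupling R (glue_plans R \<nu> W) \<nu> \<mu>"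
    unfolding is_coupling_def
  proof (intro conjI allI impI)
    show "finite (supp (glue_plans R \<nu> W))"
      by (rule finite_supp_glue_plans[OF R W fin])
    show "z \<in> R" if "glue_plans R \<nu> W (OAct p z) \<noteq> 0" for p z
      using glue_plans_act_nonzero[OF R W] that by (cases z) blast
    show "\<nu> (map_outc id id fst ob) = glue_plans R \<nu> W ob"
      "\<mu> (map_outc id id snd ob) = glue_plans R \<nu> W ob" if "\<not> is_act ob" for ob
      using that nonact by (cases ob; simp add: glue_plans_def)+
    show "\<nu> (OAct p x) = mass (glue_plans R \<nu> W) {OAct p z |z. z \<in> R \<and> fst z = x}" for p x
      by (rule glue_plans_fst_marginal[OF R W])
    show "\<mu> (OAct p y) = mass (glue_plans R \<nu> W) {OAct p z |z. z \<in> R \<and> snd z = y}" for p y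
      by (rule glue_plans_snd_marginal[OF R W])
  qed
  then show ?thesis
    by blast
qed

section \<open>Derivatives\<close>

lemma finite_supp_cont: "finite (supp \<nu>) \<Longrightarrow> finite (supp (cont \<nu> f x))"
  by (auto simp: cont_def finite_subset[OF supp_delta] split: outc.splits)

lemma finite_supp_deriv: "finite (supp (deriv e A))"
proof (induction e)
  case (ETest b)
  have "supp (deriv (ETest b) A) \<subseteq> {OAcc, ORej}"
    using supp_delta[of OAcc] supp_delta[of ORej] by auto
  then show ?case
    by (rule finite_subset) simp
next
  case (ESeq e f)
  have "supp (deriv (ESeq e f) A)
      \<subseteq> (\<Union>x\<in>supp (deriv e A). supp (\<lambda>y. deriv e A x * cont (deriv f A) f x y))"
    unfolding deriv.simps by (rule supp_sum_subset)
  moreover have "finite (supp (\<lambda>y. deriv e A x * cont (deriv f A) f x y))" for x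
  proof (rule finite_subset)
    show "supp (\<lambda>y. deriv e A x * cont (deriv f A) f x y) \<subseteq> supp (cont (deriv f A) f x)"
      by (auto simp: supp_def)
    show "finite (supp (cont (deriv f A) f x))"
      using ESeq.IH(2) by (rule finite_supp_cont)
  qed
  ultimately show ?case
    using ESeq.IH(1) by (meson finite_UN_I finite_subset)
next
  case (ELoop e b)
  let ?h = "map_outc id id (\<lambda>e'. ESeq e' (ELoop e b))"
  have "supp (deriv (ELoop e b) A) \<subseteq> {OAcc, ORej} \<union> ?h ` supp (deriv e A)"
  proof
    fix y assume y: "y \<in> supp (deriv (ELoop e b) A)"
    show "y \<in> {OAcc, ORej} \<union> ?h ` supp (deriv e A)"
    proof (cases y)
      case (OOut v)
      with y have "OOut v \<in> supp (deriv e A)"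
        by (auto simp: supp_def split: if_splits)
      then show ?thesis
        using OOut by force
    next
      case (OAct q g)
      with y obtain e' where "g = ESeq e' (ELoop e b)" "deriv e A (OAct q e') \<noteq> 0"
        by (auto simp: supp_def split: exp.splits if_splits) (metis mult_zero_right)
      then show ?thesis
        using OAct by (force simp: supp_def)
    qed simp_all
  qed
  then show ?case
    using ELoop.IH by (meson finite_Un finite_imageI finite.intros finite_subset)
next
  case (EWeight e r s f)
  have "supp (deriv (EWeight e r s f) A) \<subseteq> supp (deriv e A) \<union> supp (deriv f A)"
    by (auto simp: supp_def)
  then show ?case
    using EWeight.IH by (meson finite_Un finite_subset)
qed (simp_all add: finite_subset[OF supp_delta])

lemma cont_nonact:
  assumes "\<not> is_act ob"
  shows "cont \<nu> f x ob = (if x = OAcc then \<nu> ob else if x = ob then 1 else 0)"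
  using assms by (cases ob; cases x) (auto simp: cont_def delta_def)

lemma deriv_seq_nonact:
  assumes "\<not> is_act ob"
  shows "deriv (ESeq e f) A ob =
    (if ob = OAcc then 0 else deriv e A ob) + deriv e A OAcc * deriv f A ob"
proof -
  let ?g = "deriv e A"
  have "deriv (ESeq e f) A ob =
      (\<Sum>x\<in>supp ?g. ?g x * (if x = OAcc then deriv f A ob else if x = ob then 1 else 0))"
    using assms by (simp add: cont_nonact)
  also have "\<dots> = (\<Sum>x\<in>supp ?g. (if x = OAcc then ?g x * deriv f A ob else 0)
      + (if x = ob then ?g x * (if ob = OAcc then 0 else 1) else 0))"
    by (rule sum.cong) auto
  also have "\<dots> = ?g OAcc * deriv f A ob + ?g ob * (if ob = OAcc then 0 else 1)"
    by (simp add: sum.distrib sum_supp_if_eq[OF finite_supp_deriv])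
  finally show ?thesis
    by (simp add: add.commute)
qed

lemma deriv_seq_simps [simp]:
  "deriv (ESeq e f) A OAcc = deriv e A OAcc * deriv f A OAcc"
  "deriv (ESeq e f) A ORej = deriv e A ORej + deriv e A OAcc * deriv f A ORej"
  "deriv (ESeq e f) A (OOut v) = deriv e A (OOut v) + deriv e A OAcc * deriv f A (OOut v)"
  by (simp_all add: deriv_seq_nonact del: deriv.simps)

definition pre_seq :: "('t, 'p, 'v, 's) exp \<Rightarrow> ('t, 'p, 'v, 's) exp set \<Rightarrow> ('t, 'p, 'v, 's) exp set" where
  "pre_seq f S = {e. ESeq e f \<in> S}"

lemma mass_cont:
  "mass (cont \<nu> f x) (OAct p ` S) = (if x = OAcc then mass \<nu> (OAct p ` S) else 0)
     + (if x \<in> OAct p ` pre_seq f S then 1 else (0::'s::wgkat_semiring))"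
  by (cases x) (auto simp: cont_def mass_delta pre_seq_def image_iff)

lemma mass_deriv_seq [simp]:
  "mass (deriv (ESeq e f) A) (OAct p ` S) =
     mass (deriv e A) (OAct p ` pre_seq f S) + deriv e A OAcc * mass (deriv f A) (OAct p ` S)"
proof -
  let ?g = "deriv e A" and ?T = "OAct p ` pre_seq f S" and ?m = "mass (deriv f A) (OAct p ` S)"
  have "mass (deriv (ESeq e f) A) (OAct p ` S)
      = (\<Sum>x\<in>supp ?g. ?g x * mass (cont (deriv f A) f x) (OAct p ` S))"
    unfolding deriv.simps by (intro mass_sum finite_supp_deriv finite_supp_cont)
  also have "\<dots> = (\<Sum>x\<in>supp ?g. (if x = OAcc then ?g x * ?m else 0) + (if x \<in> ?T then ?g x else 0))"
    by (rule sum.cong) (auto simp: mass_cont distrib_left)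
  also have "\<dots> = ?g OAcc * ?m + sum ?g (?T \<inter> supp ?g)"
    by (simp add: sum.distrib sum_supp_if_eq[OF finite_supp_deriv] sum.inter_filter[OF finite_supp_deriv]
        Int_def conj_commute)
  finally show ?thesis
    by (simp add: mass_def add.commute)
qed

lemma mass_deriv_loop [simp]:
  "mass (deriv (ELoop e b) A) (OAct p ` S) =
     (if beval b A then cstar (deriv e A OAcc) * mass (deriv e A) (OAct p ` pre_seq (ELoop e b) S)
      else 0)"
proof -
  let ?l = "ELoop e b" and ?T = "pre_seq (ELoop e b) S"
  let ?c = "if beval b A then cstar (deriv e A OAcc) else 0"
  have "OAct p ` S \<inter> supp (deriv ?l A) = (\<lambda>e'. OAct p (ESeq e' ?l)) ` ?T \<inter> supp (deriv ?l A)"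
    by (auto simp: supp_def pre_seq_def split: exp.splits if_splits)
  then have "mass (deriv ?l A) (OAct p ` S) = mass (deriv ?l A) ((\<lambda>e'. OAct p (ESeq e' ?l)) ` ?T)"
    by (simp add: mass_def)
  also have "\<dots> = mass (\<lambda>e'. deriv ?l A (OAct p (ESeq e' ?l))) ?T"
    by (rule mass_image[of _ _ "deriv ?l A", unfolded comp_def]) (simp add: inj_on_def)
  also have "\<dots> = mass (\<lambda>e'. ?c * deriv e A (OAct p e')) ?T"
    by (rule mass_cong) (simp add: deriv.simps)
  also have "\<dots> = mass (\<lambda>x. ?c * deriv e A x) (OAct p ` ?T)"
    by (rule mass_image[of _ _ "\<lambda>x. ?c * deriv e A x", unfolded comp_def, symmetric])
      (simp add: inj_on_def)
  also have "\<dots> = ?c * mass (deriv e A) (OAct p ` ?T)"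
    by (rule mass_scale[OF finite_supp_deriv])
  finally show ?thesis
    by simp
qed

lemma deriv_acc_eq_Eterm: "deriv e A OAcc = Eterm e A"
  by (induction e) (auto simp: delta_def simp del: deriv.simps(6))

declare deriv.simps [simp del]

lemma deriv_simps [simp]:
  "deriv (EGuard e b f) A = (if beval b A then deriv e A else deriv f A)"
  "deriv (EWeight e r s f) A OAcc = r * deriv e A OAcc + s * deriv f A OAcc"
  "deriv (EWeight e r s f) A ORej = r * deriv e A ORej + s * deriv f A ORej"
  "deriv (EWeight e r s f) A (OOut v) = r * deriv e A (OOut v) + s * deriv f A (OOut v)"
  "deriv (ETest b) A OAcc = (if beval b A then 1 else 0)"
  "deriv (ETest b) A ORej = (if beval b A then 0 else 1)"
  "deriv (ETest b) A (OOut v) = 0"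
  "deriv (EOut u) A OAcc = 0"
  "deriv (EOut u) A ORej = 0"
  "deriv (EOut u) A (OOut v) = (if v = u then 1 else 0)"
  "deriv (ELoop e b) A OAcc = (if beval b A then 0 else 1)"
  "deriv (ELoop e b) A ORej = (if beval b A then cstar (deriv e A OAcc) * deriv e A ORej else 0)"
  "deriv (ELoop e b) A (OOut v) =
     (if beval b A then cstar (deriv e A OAcc) * deriv e A (OOut v) else 0)"
  by (simp_all add: deriv.simps delta_def)

lemma mass_deriv_simps [simp]:
  "mass (deriv (EWeight e r s f) A) T = r * mass (deriv e A) T + s * mass (deriv f A) T"
  "mass (deriv (ETest b) A) (OAct p ` S) = 0"
  "mass (deriv (EOut v) A) (OAct p ` S) = 0"
  by (simp_all add: mass_add mass_scale finite_supp_scale finite_supp_deriv deriv.simps mass_delta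
      image_iff)

lemma deriv_wdot [simp]:
  "deriv (wdot r) A OAcc = r" "deriv (wdot r) A ORej = 0" "deriv (wdot r) A (OOut v) = 0"
  "mass (deriv (wdot r) A) (OAct p ` S) = 0"
  by (simp_all add: wdot_def)

section \<open>Soundness of the axioms for derivatives\<close>

lemma cstar_unfold_mult:
  fixes a :: "'s::wgkat_semiring"
  shows "cstar a * x = x + a * (cstar a * x)"
proof -
  have "cstar a * x = (1 + a * cstar a) * x"
    using conway_prod[of a 1] by simp
  then show ?thesis
    by (simp add: algebra_simps)
qed

lemma cstar_zero: "cstar (0::'s::wgkat_semiring) = 1"
  using conway_prod[of 0 0] by simp

text \<open>The semiring identity behind axiom L2.\<close>

lemma cstar_weighted_unfold:
  fixes r a s x :: "'s::wgkat_semiring"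
  shows "cstar (r * a + s) * (r * x) = cstar s * r * (x + a * (cstar (r * a + s) * (r * x)))"
proof -
  let ?q = "r * a * cstar s"
  have sum: "cstar (r * a + s) = cstar s * cstar ?q"
    using conway_sum[of s "r * a"] by (simp add: add.commute)
  have "cstar s * (cstar ?q * r) = cstar s * (r + ?q * (cstar ?q * r))"
    using cstar_unfold_mult[of ?q r] by simp
  then have "cstar (r * a + s) * r = cstar s * r + cstar s * r * a * (cstar (r * a + s) * r)"
    unfolding sum by (simp add: algebra_simps)
  then have "cstar (r * a + s) * r * x = (cstar s * r + cstar s * r * a * (cstar (r * a + s) * r)) * x"
    by simp
  then show ?thesis
    by (simp add: algebra_simps)
qed

definition wequiv_closed :: "('t::finite, 'p, 'v, 's::wgkat_semiring) exp set \<Rightarrow> bool" where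
  "wequiv_closed S \<longleftrightarrow> (\<forall>x y. x \<equiv>\<^sub>w y \<longrightarrow> x \<in> S \<longrightarrow> y \<in> S)"

text \<open>Closed sets rather than equivalence classes are needed for the induction: the preimage
  \<open>pre_seq f C\<close> of a class is closed but in general not a class.\<close>

definition wequiv_lift :: "(('v, 'p, ('t::finite, 'p, 'v, 's::wgkat_semiring) exp) outc \<Rightarrow> 's)
    \<Rightarrow> (('v, 'p, ('t, 'p, 'v, 's) exp) outc \<Rightarrow> 's) \<Rightarrow> bool" where
  "wequiv_lift \<nu> \<mu> \<longleftrightarrow> (\<forall>ob. \<not> is_act ob \<longrightarrow> \<nu> ob = \<mu> ob) \<and>
     (\<forall>p S. wequiv_closed S \<longrightarrow> mass \<nu> (OAct p ` S) = mass \<mu> (OAct p ` S))"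

lemma wequiv_liftI:
  assumes "\<nu> OAcc = \<mu> OAcc" "\<nu> ORej = \<mu> ORej" "\<And>v. \<nu> (OOut v) = \<mu> (OOut v)"
    and "\<And>p S. wequiv_closed S \<Longrightarrow> mass \<nu> (OAct p ` S) = mass \<mu> (OAct p ` S)"
  shows "wequiv_lift \<nu> \<mu>"
  unfolding wequiv_lift_def
proof (intro conjI allI impI)
  show "\<nu> ob = \<mu> ob" if "\<not> is_act ob" for ob
    using that assms by (cases ob) simp_all
qed (use assms in blast)

lemma wequiv_lift_refl [simp]: "wequiv_lift \<nu> \<nu>"
  by (simp add: wequiv_lift_def)

lemma wequiv_liftD:
  assumes "wequiv_lift \<nu> \<mu>"
  shows "\<nu> OAcc = \<mu> OAcc" "\<nu> ORej = \<mu> ORej" "\<nu> (OOut v) = \<mu> (OOut v)"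
    and "wequiv_closed S \<Longrightarrow> mass \<nu> (OAct p ` S) = mass \<mu> (OAct p ` S)"
  using assms unfolding wequiv_lift_def by simp_all

lemma wequiv_closed_iff: "wequiv_closed S \<Longrightarrow> x \<equiv>\<^sub>w y \<Longrightarrow> x \<in> S \<longleftrightarrow> y \<in> S"
  unfolding wequiv_closed_def by (meson wequiv.sym)

lemma wequiv_closed_pre_seq: "wequiv_closed S \<Longrightarrow> wequiv_closed (pre_seq f S)"
  unfolding wequiv_closed_def pre_seq_def by (auto intro: wequiv.seq_cong wequiv.refl)

lemma pre_seq_cong: "wequiv_closed S \<Longrightarrow> f \<equiv>\<^sub>w f' \<Longrightarrow> pre_seq f S = pre_seq f' S"
  unfolding pre_seq_def using wequiv_closed_iff wequiv.seq_cong wequiv.refl by blast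

lemma wequiv_lift_L2:
  fixes e f g :: "('t::finite, 'p, 'v, 's::wgkat_semiring) exp"
  assumes IH: "wequiv_lift (deriv e A) (deriv (EGuard (EWeight f r s (ETest BOne)) c g) A)"
  shows "wequiv_lift (deriv (ESeq (ETest c) (ELoop e b)) A)
    (deriv (ESeq (ETest c) (EGuard (ESeq (wdot (cstar s * r)) (ESeq f (ELoop e b))) b (ETest BOne))) A)"
proof (cases "beval c A \<and> beval b A")
  case True
  have Ed: "deriv e A OAcc = r * deriv f A OAcc + s"
    "deriv e A ORej = r * deriv f A ORej" "deriv e A (OOut v) = r * deriv f A (OOut v)"
    "wequiv_closed S \<Longrightarrow> mass (deriv e A) (OAct p ` S) = r * mass (deriv f A) (OAct p ` S)" for v p S
    using wequiv_liftD[OF IH] True by simp_all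
  show ?thesis
  proof (rule wequiv_liftI)
    fix p and S :: "('t, 'p, 'v, 's) exp set"
    assume "wequiv_closed S"
    then show "mass (deriv (ESeq (ETest c) (ELoop e b)) A) (OAct p ` S) =
      mass (deriv (ESeq (ETest c) (EGuard (ESeq (wdot (cstar s * r)) (ESeq f (ELoop e b))) b (ETest BOne))) A)
        (OAct p ` S)"
      using True by (simp add: Ed wequiv_closed_pre_seq) (rule cstar_weighted_unfold)
  qed (simp_all add: Ed True, (rule cstar_weighted_unfold)+)
qed (auto intro!: wequiv_liftI)

lemma wequiv_lift_F1:
  fixes e f g :: "('t::finite, 'p, 'v, 's::wgkat_semiring) exp"
  assumes g: "g \<equiv>\<^sub>w ESeq (ELoop e b) f" and e0: "deriv e A OAcc = 0"
    and IH: "wequiv_lift (deriv g A) (deriv (EGuard (ESeq e g) b f) A)"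
  shows "wequiv_lift (deriv g A) (deriv (ESeq (ELoop e b) f) A)"
proof (cases "beval b A")
  case False
  then have "wequiv_lift (deriv g A) (deriv f A)"
    using IH by simp
  with False show ?thesis
    by (intro wequiv_liftI) (simp_all add: wequiv_liftD)
next
  case True
  let ?G = "deriv (EGuard (ESeq e g) b f) A"
  have G: "?G OAcc = 0" "?G ORej = deriv e A ORej" "?G (OOut v) = deriv e A (OOut v)"
    "mass ?G (OAct p ` S) = mass (deriv e A) (OAct p ` pre_seq g S)" for v p S
    using True by (simp_all add: e0)
  \<comment> \<open>Rewrite with \<open>G\<close> first: unfolded, \<open>IH\<close> expresses \<open>deriv g A\<close> through itself and the
    simplifier loops.\<close>
  show ?thesis
  proof (rule wequiv_liftI)
    fix p and S :: "('t, 'p, 'v, 's) exp set"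
    assume S: "wequiv_closed S"
    have "ESeq x g \<equiv>\<^sub>w ESeq (ESeq x (ELoop e b)) f" for x
      using g by (meson wequiv.S2 wequiv.refl wequiv.seq_cong wequiv.sym wequiv.trans)
    then have "pre_seq g S = pre_seq (ELoop e b) (pre_seq f S)"
      unfolding pre_seq_def using wequiv_closed_iff[OF S] by blast
    then show "mass (deriv g A) (OAct p ` S) = mass (deriv (ESeq (ELoop e b) f) A) (OAct p ` S)"
      using wequiv_liftD(4)[OF IH S] True by (simp only: G) (simp add: e0 cstar_zero)
  qed (use wequiv_liftD[OF IH] True in \<open>simp_all only: G\<close>, simp_all add: e0 cstar_zero)
qed

lemma wequiv_lift_deriv:
  fixes e f :: "('t::finite, 'p, 'v, 's::wgkat_semiring) exp"
  assumes "e \<equiv>\<^sub>w f"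
  shows "wequiv_lift (deriv e A) (deriv f A)"
  using assms
proof (induction rule: wequiv.induct)
  case (sym e f)
  then show ?case
    by (simp add: wequiv_lift_def)
next
  case (trans e f g)
  then show ?case
    by (simp add: wequiv_lift_def)
next
  case (test_ba b c)
  then show ?case
    by (simp add: wequiv_lift_def ba_equiv_def deriv.simps)
next
  case (guard_ba b c e f)
  then show ?case
    by (simp add: ba_equiv_def)
next
  case (guard_cong e e' f f' b)
  then show ?case
    by simp
next
  case (loop_ba b c e)
  then have "ELoop e b \<equiv>\<^sub>w ELoop e c" "beval b A = beval c A"
    by (auto intro: wequiv.loop_ba simp: ba_equiv_def)
  then show ?case
    by (intro wequiv_liftI) (simp_all add: pre_seq_cong)
next
  case (seq_cong e e' f f')
  then show ?case
    by (intro wequiv_liftI)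
      (simp_all add: wequiv_liftD wequiv_closed_pre_seq pre_seq_cong[of _ f f'])
next
  case (loop_cong e e' b)
  then have "ELoop e b \<equiv>\<^sub>w ELoop e' b"
    by (blast intro: wequiv.loop_cong)
  with loop_cong show ?case
    by (intro wequiv_liftI) (simp_all add: wequiv_liftD wequiv_closed_pre_seq pre_seq_cong)
next
  case (weight_cong e e' f f' r s)
  then show ?case
    by (intro wequiv_liftI) (simp_all add: wequiv_liftD)
next
  case (S1r e)
  have "pre_seq (ETest BOne) S = S" if "wequiv_closed S" for S :: "('t, 'p, 'v, 's) exp set"
    unfolding pre_seq_def using wequiv_closed_iff[OF that wequiv.S1r] by blast
  then show ?case
    by (intro wequiv_liftI) simp_all
next
  case (S2 e f g)
  have "pre_seq f (pre_seq g S) = pre_seq (ESeq f g) S"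
    if "wequiv_closed S" for S :: "('t, 'p, 'v, 's) exp set"
    unfolding pre_seq_def using wequiv_closed_iff[OF that wequiv.S2] by blast
  then show ?case
    by (intro wequiv_liftI) (simp_all add: algebra_simps)
next
  case (L1 e b)
  show ?case
    by (intro wequiv_liftI) (simp_all add: cstar_unfold_mult[symmetric])
next
  case (L2 e f r s c g b)
  then show ?case
    by (intro wequiv_lift_L2) blast
next
  case (F1 g e b f)
  then show ?case
    by (intro wequiv_lift_F1 wequiv.F1) (simp_all add: deriv_acc_eq_Eterm)
qed (intro wequiv_liftI; simp add: algebra_simps)+

theorem mainTheorem5:
  fixes e f :: "('t::finite, 'p, 'v, 's::wgkat_semiring) exp"
  assumes "e \<equiv>\<^sub>w f"
  shows "e \<sim>\<^sub>w f"
proof -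
  let ?R = "{(e, f :: ('t, 'p, 'v, 's) exp). e \<equiv>\<^sub>w f}"
  have R: "equiv UNIV ?R"
    by (rule equivI) (auto intro: refl_onI symI transI wequiv.refl wequiv.sym wequiv.trans)
  have classes_closed: "wequiv_closed C" if "C \<in> UNIV // ?R" for C
    using that unfolding wequiv_closed_def quotient_def by (blast intro: wequiv.trans)
  have "bisim ?R"
  proof (rule bisimI_coupling)
    fix e f :: "('t, 'p, 'v, 's) exp" and A
    assume "(e, f) \<in> ?R"
    then have lift: "wequiv_lift (deriv e A) (deriv f A)"
      by (simp add: wequiv_lift_deriv)
    show "\<exists>\<kappa>. is_coupling ?R \<kappa> (deriv e A) (deriv f A)"
      using lift classes_closed
      by (intro coupling_exists[OF R finite_supp_deriv finite_supp_deriv])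
        (simp_all add: wequiv_lift_def)
  qed
  with assms show ?thesis
    unfolding bisimilar_def by blast
qed

end
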